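(* For any function $g=g(\mathbf{x}_p)\in C^1(\mathbb{R}^{p+1},\mathbb{A})$ (depending only on $\mathbf{x}_p$) and any $k\in\mathbb{N}$: $$D_{\mathbf{x}}(\underline{\mathbf{x}}_q^{2k}g)=\underline{\mathbf{x}}_q^{2k}(D_{\mathbf{x}_p}g)-2k\,\underline{\mathbf{x}}_q^{2k-1}g,\qquad D_{\mathbf{x}}(\underline{\mathbf{x}}_q^{2k+1}g)=\underline{\mathbf{x}}_q^{2k+1}(\overline{D}_{\mathbf{x}_p}g)-(2k+q)\,\underline{\mathbf{x}}_q^{2k}g,$$ $$\overline{D}_{\mathbf{x}}(\underline{\mathbf{x}}_q^{2k}g)=\underline{\mathbf{x}}_q^{2k}(\overline{D}_{\mathbf{x}_p}g)+2k\,\underline{\mathbf{x}}_q^{2k-1}g,\qquad \overline{D}_{\mathbf{x}}(\underline{\mathbf{x}}_q^{2k+1}g)=\underline{\mathbf{x}}_q^{2k+1}(D_{\mathbf{x}_p}g)+(2k+q)\,\underline{\mathbf{x}}_q^{2k}g.$$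
   Context: Let $\mathbb{A}$ be a real alternative algebra (the associator $[a,b,c]=(ab)c-a(bc)$ is an alternating trilinear function) with unity $1$, of finite real dimension $d>1$, equipped with an anti-involution $a\mapsto a^c$ (real linear, $a^c=a$ for real $a$, $(a^c)^c=a$, $(ab)^c=b^ca^c$). Let $t(x)=x+x^c$, $n(x)=xx^c$, $\mathbb{S}_{\mathbb{A}}=\{x: t(x)=0,\ n(x)=1\}$ (assumed nonempty) and $Q_{\mathbb{A}}=\mathbb{R}\cup\{x: t(x)\in\mathbb{R},\ n(x)\in\mathbb{R},\ 4n(x)>t(x)^2\}$. Let $M$ be a real subspace with $\mathbb{R}\subsetneq M\subseteq Q_{\mathbb{A}}$ having a basis $(v_0,\dots,v_m)$, $m\ge1$, $v_0=1$, $v_s\in\mathbb{S}_{\mathbb{A}}$, $v_sv_t=-v_tv_s$ for distinct $s,t\ge1$. Identify $x=\sum x_sv_s\in M$ with $(x_0,\dots,x_m)\in\mathbb{R}^{m+1}$; differentiate componentwise. Fix $p\in\{0,\dots,m-1\}$, $q=m-p$; $\mathbf{x}=\mathbf{x}_p+\underline{\mathbf{x}}_q$ with $\mathbf{x}_p=\sum_{s=0}^px_sv_s\in\mathbb{R}^{p+1}$, $\underline{\mathbf{x}}_q=\sum_{s=p+1}^m x_sv_s$; powers $\underline{\mathbf{x}}_q^j$ are taken in $\mathbb{A}$ (terms with coefficient $2k=0$ vanish). $D_{\mathbf{x}_p}f=\sum_{s=0}^p v_s\partial_{x_s}f$, $\overline{D}_{\mathbf{x}_p}f=\partial_{x_0}f-\sum_{s=1}^pv_s\partial_{x_s}f$,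 $D_{\mathbf{x}}f=\sum_{s=0}^mv_s\partial_{x_s}f$, $\overline{D}_{\mathbf{x}}f=\partial_{x_0}f-\sum_{s=1}^mv_s\partial_{x_s}f$ (all acting on the left). *)

theory Defs
  imports "HOL-Analysis.Analysis"
begin

text \<open>The algebra A is a finite-dimensional real vector space (type class euclidean_space,
  whose inner product is irrelevant) carrying a multiplication mul, a unity e and
  a conjugation cj.\<close>

definition associator :: "('a \<Rightarrow> 'a \<Rightarrow> 'a) \<Rightarrow> 'a \<Rightarrow> 'a \<Rightarrow> 'a \<Rightarrow> 'a::real_vector" where
  "associator mul a b c = mul (mul a b) c - mul a (mul b c)"

text \<open>Real alternative algebra with unity: real-bilinear multiplication, two-sided unit,
  and the associator is an alternating trilinear map (it vanishes whenever two arguments agree;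
  trilinearity follows from bilinearity of mul).\<close>
definition alt_algebra :: "('a \<Rightarrow> 'a \<Rightarrow> 'a) \<Rightarrow> 'a::real_vector \<Rightarrow> bool" where
  "alt_algebra mul e \<longleftrightarrow> bilinear mul \<and> (\<forall>a. mul e a = a \<and> mul a e = a) \<and>
     (\<forall>a b. associator mul a a b = 0 \<and> associator mul a b a = 0 \<and> associator mul b a a = 0)"

definition reals_in :: "'a \<Rightarrow> 'a::real_vector set" where
  "reals_in e = range (\<lambda>r::real. r *\<^sub>R e)"

definition anti_involution :: "('a \<Rightarrow> 'a \<Rightarrow> 'a) \<Rightarrow> 'a::real_vector \<Rightarrow> ('a \<Rightarrow> 'a) \<Rightarrow> bool" where
  "anti_involution mul e cj \<longleftrightarrow> linear cj \<and> (\<forall>r::real. cj (r *\<^sub>R e) = r *\<^sub>R e) \<and>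
     (\<forall>a. cj (cj a) = a) \<and> (\<forall>a b. cj (mul a b) = mul (cj b) (cj a))"

definition trace_A :: "('a \<Rightarrow> 'a) \<Rightarrow> 'a \<Rightarrow> 'a::real_vector" where
  "trace_A cj x = x + cj x"

definition norm_A :: "('a \<Rightarrow> 'a \<Rightarrow> 'a) \<Rightarrow> ('a \<Rightarrow> 'a) \<Rightarrow> 'a \<Rightarrow> 'a" where
  "norm_A mul cj x = mul x (cj x)"

definition sphere_A :: "('a \<Rightarrow> 'a \<Rightarrow> 'a) \<Rightarrow> 'a \<Rightarrow> ('a \<Rightarrow> 'a) \<Rightarrow> 'a::real_vector set" where
  "sphere_A mul e cj = {x. trace_A cj x = 0 \<and> norm_A mul cj x = e}"

definition quadcone_A :: "('a \<Rightarrow> 'a \<Rightarrow> 'a) \<Rightarrow> 'a \<Rightarrow> ('a \<Rightarrow> 'a) \<Rightarrow> 'a::real_vector set" where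
  "quadcone_A mul e cj = reals_in e \<union>
     {x. \<exists>t n::real. trace_A cj x = t *\<^sub>R e \<and> norm_A mul cj x = n *\<^sub>R e \<and> 4 * n > t\<^sup>2}"

primrec apow :: "('a \<Rightarrow> 'a \<Rightarrow> 'a) \<Rightarrow> 'a \<Rightarrow> 'a \<Rightarrow> nat \<Rightarrow> 'a" where
  "apow mul e a 0 = e"
| "apow mul e a (Suc n) = mul a (apow mul e a n)"

text \<open>Points of R^(m+1) are functions nat \<Rightarrow> real (coordinates beyond m are ignored).
  Partial derivative with respect to the s-th coordinate.\<close>
definition partial :: "((nat \<Rightarrow> real) \<Rightarrow> 'a::real_normed_vector) \<Rightarrow> nat \<Rightarrow> (nat \<Rightarrow> real) \<Rightarrow> 'a" where
  "partial f s x = vector_derivative (\<lambda>t. f (x(s := t))) (at (x s))"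

definition C1_in_first :: "nat \<Rightarrow> ((nat \<Rightarrow> real) \<Rightarrow> 'a::real_normed_vector) \<Rightarrow> bool" where
  "C1_in_first p g \<longleftrightarrow>
     (\<forall>x y. (\<forall>s\<le>p. x s = y s) \<longrightarrow> g x = g y) \<and>
     continuous_on UNIV g \<and>
     (\<forall>s\<le>p. \<forall>x. (\<lambda>t. g (x(s := t))) differentiable (at (x s))) \<and>
     (\<forall>s\<le>p. continuous_on UNIV (partial g s))"

definition Dop :: "('a \<Rightarrow> 'a \<Rightarrow> 'a) \<Rightarrow> (nat \<Rightarrow> 'a) \<Rightarrow> nat \<Rightarrow> ((nat \<Rightarrow> real) \<Rightarrow> 'a::real_normed_vector) \<Rightarrow> (nat \<Rightarrow> real) \<Rightarrow> 'a" where
  "Dop mul v n f x = (\<Sum>s\<le>n. mul (v s) (partial f s x))"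

definition Dbar :: "('a \<Rightarrow> 'a \<Rightarrow> 'a) \<Rightarrow> (nat \<Rightarrow> 'a) \<Rightarrow> nat \<Rightarrow> ((nat \<Rightarrow> real) \<Rightarrow> 'a::real_normed_vector) \<Rightarrow> (nat \<Rightarrow> real) \<Rightarrow> 'a" where
  "Dbar mul v n f x = partial f 0 x - (\<Sum>s\<in>{1..n}. mul (v s) (partial f s x))"

definition xq :: "(nat \<Rightarrow> 'a::real_vector) \<Rightarrow> nat \<Rightarrow> nat \<Rightarrow> (nat \<Rightarrow> real) \<Rightarrow> 'a" where
  "xq v p m x = (\<Sum>s\<in>{p+1..m}. x s *\<^sub>R v s)"

end

theory Submission
  imports Defs
begin

text \<open>Write X for x_q and N for its squared length x_(p+1)^2 + ... + x_m^2. Since the units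
  v_(p+1), ..., v_m square to -1 and pairwise anticommute, X^2 = -N; left alternativity then gives
  X^(2k) = (-N)^k and X^(2k+1) = (-N)^k X. Split D_x into the x_0-derivative, the directions
  v_1, ..., v_p and the directions v_(p+1), ..., v_m. Along the first two groups X is constant and
  only g is differentiated; each v_s with 1 <= s <= p anticommutes with X, hence commutes with
  even and anticommutes with odd powers of X, which turns D_(x_p) into its conjugate for odd
  exponents. Along the last group g is constant: the derivative -2k x_s (-N)^(k-1) of (-N)^k sums
  against v_s to -2k X^(2k-1), and for odd exponents the derivative v_s of X adds
  (-N)^k (v_(p+1)^2 + ... + v_m^2) = -q X^(2k).\<close>

section \<open>Partial derivatives along coordinate lines\<close>

definition has_partial ::
    "((nat \<Rightarrow> real) \<Rightarrow> 'a::real_normed_vector) \<Rightarrow> nat \<Rightarrow> 'a \<Rightarrow> (nat \<Rightarrow> real) \<Rightarrow> bool"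
  where "has_partial f s D x \<longleftrightarrow> ((\<lambda>t. f (x(s := t))) has_vector_derivative D) (at (x s))"

lemma partial_eqI: "has_partial f s D x \<Longrightarrow> partial f s x = D"
  unfolding has_partial_def partial_def by (rule vector_derivative_at)

lemma has_partial_partial:
  "(\<lambda>t. f (x(s := t))) differentiable (at (x s)) \<Longrightarrow> has_partial f s (partial f s x) x"
  unfolding has_partial_def partial_def by (simp add: vector_derivative_works[symmetric])

lemma has_partial_const_line: "(\<And>t. f (x(s := t)) = f x) \<Longrightarrow> has_partial f s 0 x"
  unfolding has_partial_def by simp

lemma has_partial_bilinear:
  assumes "bounded_bilinear h" and "has_partial f s F' x" and "has_partial g s G' x"
  shows "has_partial (\<lambda>y. h (f y) (g y)) s (h (f x) G' + h F' (g x)) x"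
  using bounded_bilinear.has_vector_derivative[OF assms(1) assms(2,3)[unfolded has_partial_def]]
  unfolding has_partial_def by simp

lemma has_partial_real_compose:
  assumes "(\<phi> has_real_derivative d) (at (f x))" and "has_partial f s D x"
  shows "has_partial (\<lambda>y. \<phi> (f y)) s (d * D) x"
proof -
  have "((\<lambda>t. f (x(s := t))) has_real_derivative D) (at (x s))"
    using assms(2) unfolding has_partial_def has_real_derivative_iff_has_vector_derivative .
  from DERIV_chain2[OF _ this] assms(1) show ?thesis
    unfolding has_partial_def has_real_derivative_iff_has_vector_derivative[symmetric] by simp
qed

lemma has_partial_line:
  assumes "\<And>t. f (x(s := t)) = f x + (t - x s) *\<^sub>R D"
  shows "has_partial f s D x"
  unfolding has_partial_def assms by (auto intro!: derivative_eq_intros)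

lemma sum_fun_upd:
  fixes h :: "nat \<Rightarrow> 'b \<Rightarrow> 'c::ab_group_add"
  assumes "finite S" and "s \<in> S"
  shows "(\<Sum>r\<in>S. h r ((x(s := t)) r)) = (\<Sum>r\<in>S. h r (x r)) + (h s t - h s (x s))"
proof -
  have "(\<Sum>r\<in>S - {s}. h r ((x(s := t)) r)) = (\<Sum>r\<in>S - {s}. h r (x r))"
    by (rule sum.cong) auto
  then show ?thesis
    using sum.remove[OF assms, of "\<lambda>r. h r ((x(s := t)) r)"] sum.remove[OF assms, of "\<lambda>r. h r (x r)"]
    by (simp add: algebra_simps)
qed

definition xq_sqnorm :: "nat \<Rightarrow> nat \<Rightarrow> (nat \<Rightarrow> real) \<Rightarrow> real" where
  "xq_sqnorm p m y = (\<Sum>r\<in>{p+1..m}. (y r)\<^sup>2)"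

lemma has_partial_xq:
  assumes "s \<in> {p+1..m}"
  shows "has_partial (xq v p m) s (v s) x"
proof (rule has_partial_line)
  fix t
  show "xq v p m (x(s := t)) = xq v p m x + (t - x s) *\<^sub>R v s"
    using sum_fun_upd[of "{p+1..m}" s "\<lambda>r a. a *\<^sub>R v r" x t] assms
    by (simp add: xq_def scaleR_diff_left)
qed

lemma has_partial_xq_sqnorm:
  assumes "s \<in> {p+1..m}"
  shows "has_partial (xq_sqnorm p m) s (2 * x s) x"
proof -
  have line: "xq_sqnorm p m (x(s := t)) = xq_sqnorm p m x + (t\<^sup>2 - (x s)\<^sup>2)" for t
    using sum_fun_upd[of "{p+1..m}" s "\<lambda>r a. a\<^sup>2" x t] assms by (simp add: xq_sqnorm_def)
  show ?thesis
    unfolding has_partial_def line has_real_derivative_iff_has_vector_derivative[symmetric]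
    by (auto intro!: derivative_eq_intros)
qed

lemma has_partial_xq_sqnorm_power:
  assumes "s \<in> {p+1..m}"
  shows "has_partial (\<lambda>y. (- xq_sqnorm p m y)^k) s
    (- 2 * real k * (- xq_sqnorm p m x)^(k-1) * x s) x"
proof -
  have "((\<lambda>u. (- u)^k) has_real_derivative real k * (- xq_sqnorm p m x)^(k-1) * -1)
      (at (xq_sqnorm p m x))"
    by (auto intro!: derivative_eq_intros)
  from has_partial_real_compose[OF this has_partial_xq_sqnorm[OF assms]]
  show ?thesis by (simp add: mult_ac)
qed

lemma xq_fun_upd_low: "s \<le> p \<Longrightarrow> xq v p m (x(s := t)) = xq v p m x"
  unfolding xq_def by (intro sum.cong) auto

section \<open>Left alternative algebras\<close>

locale unital_left_alternative =
  fixes mul :: "'a::euclidean_space \<Rightarrow> 'a \<Rightarrow> 'a" and e :: 'a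
  assumes bilinear: "bilinear mul"
    and mul_unit_left: "mul e a = a"
    and mul_unit_right: "mul a e = a"
    and left_alternative: "mul (mul a a) b = mul a (mul a b)"
begin

lemmas mul_linear =
  bilinear_ladd[OF bilinear] bilinear_radd[OF bilinear]
  bilinear_lmul[OF bilinear] bilinear_rmul[OF bilinear]
  bilinear_lneg[OF bilinear] bilinear_rneg[OF bilinear]
  bilinear_lsub[OF bilinear] bilinear_rsub[OF bilinear]
  bilinear_lzero[OF bilinear] bilinear_rzero[OF bilinear]

lemma bounded_bilinear: "bounded_bilinear mul"
  using bilinear bilinear_conv_bounded_bilinear by blast

lemma mul_sum_left: "mul (\<Sum>i\<in>I. f i) b = (\<Sum>i\<in>I. mul (f i) b)"
  using linear_sum[of "\<lambda>a. mul a b"] bilinear unfolding bilinear_def by (simp add: comp_def)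

lemma mul_sum_right: "mul a (\<Sum>i\<in>I. f i) = (\<Sum>i\<in>I. mul a (f i))"
  using linear_sum[of "mul a"] bilinear unfolding bilinear_def by (simp add: comp_def)

lemma left_alternative_polarized:
  "mul a (mul b c) + mul b (mul a c) = mul (mul a b + mul b a) c"
proof -
  have "mul (mul a a) c + (mul (mul a b) c + mul (mul b a) c) + mul (mul b b) c
      = mul a (mul a c) + (mul a (mul b c) + mul b (mul a c)) + mul b (mul b c)"
    using left_alternative[of "a + b" c]
    by (simp only: bilinear_ladd[OF bilinear] bilinear_radd[OF bilinear] add_ac)
  then show ?thesis
    by (simp add: left_alternative bilinear_ladd[OF bilinear])
qed

lemma anticommute_mul_assoc:
  assumes "mul a b = - mul b a"
  shows "mul a (mul b c) = - mul b (mul a c)"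
  using left_alternative_polarized[of a b c] assms by (simp add: mul_linear eq_neg_iff_add_eq_0)

lemma square_mul_assoc:
  assumes "mul a a = r *\<^sub>R e"
  shows "mul a (mul a c) = r *\<^sub>R c"
  using left_alternative[of a c] assms by (simp add: mul_linear mul_unit_left)

lemma apow_of_square:
  assumes "mul a a = r *\<^sub>R e"
  shows "apow mul e a (2*k) = r^k *\<^sub>R e" and "apow mul e a (2*k+1) = r^k *\<^sub>R a"
proof -
  show even: "apow mul e a (2*k) = r^k *\<^sub>R e" for k
  proof (induction k)
    case (Suc k)
    have "apow mul e a (2 * Suc k) = mul a (mul a (apow mul e a (2*k)))" by simp
    also have "\<dots> = r^Suc k *\<^sub>R e" using Suc square_mul_assoc[OF assms] by simp
    finally show ?case .
  qed simp
  show "apow mul e a (2*k+1) = r^k *\<^sub>R a"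
    using even[of k] by (simp add: mul_linear mul_unit_right)
qed

lemma anticommute_sum:
  assumes "\<And>i. i \<in> I \<Longrightarrow> mul a (w i) = - mul (w i) a"
  shows "mul a (\<Sum>i\<in>I. c i *\<^sub>R w i) = - mul (\<Sum>i\<in>I. c i *\<^sub>R w i) a"
  using assms by (simp add: mul_sum_left mul_sum_right mul_linear sum_negf[symmetric])

lemma square_sum_anticommuting:
  assumes "finite I"
    and "\<And>i. i \<in> I \<Longrightarrow> mul (w i) (w i) = - e"
    and "\<And>i j. i \<in> I \<Longrightarrow> j \<in> I \<Longrightarrow> i \<noteq> j \<Longrightarrow> mul (w i) (w j) = - mul (w j) (w i)"
  shows "mul (\<Sum>i\<in>I. c i *\<^sub>R w i) (\<Sum>i\<in>I. c i *\<^sub>R w i) = - (\<Sum>i\<in>I. (c i)\<^sup>2) *\<^sub>R e"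
  using assms
proof (induction I rule: finite_induct)
  case empty
  have "mul 0 0 = 0" by (rule bilinear_lzero[OF bilinear])
  then show ?case by simp
next
  case (insert i I)
  define W where "W = (\<Sum>j\<in>I. c j *\<^sub>R w j)"
  have "mul (w i) W = - mul W (w i)"
    unfolding W_def using insert.hyps(2) insert.prems(2) by (intro anticommute_sum) blast
  then have anti: "mul (w i) W + mul W (w i) = 0" by simp
  have IH: "mul W W = - (\<Sum>j\<in>I. (c j)\<^sup>2) *\<^sub>R e"
    unfolding W_def
    using insert.IH[OF insert.prems(1)[OF insertI2] insert.prems(2)[OF insertI2 insertI2]] .
  have "mul (c i *\<^sub>R w i + W) (c i *\<^sub>R w i + W)
      = (c i)\<^sup>2 *\<^sub>R mul (w i) (w i) + c i *\<^sub>R (mul (w i) W + mul W (w i)) + mul W W"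
    by (simp add: mul_linear power2_eq_square scaleR_add_right add_ac)
  also have "\<dots> = - ((c i)\<^sup>2 + (\<Sum>j\<in>I. (c j)\<^sup>2)) *\<^sub>R e"
    unfolding anti IH insert.prems(1)[OF insertI1] by (simp add: algebra_simps)
  finally show ?case using insert.hyps by (simp add: W_def)
qed

end

lemma sphere_A_square:
  assumes "bilinear mul" and "a \<in> sphere_A mul e cj"
  shows "mul a a = - e"
proof -
  have "a + cj a = 0" and "mul a (cj a) = e"
    using assms(2) unfolding sphere_A_def trace_A_def norm_A_def by auto
  then have "cj a = - a" and "mul a (cj a) = e"
    by (simp_all add: add_eq_0_iff)
  then have "- mul a a = e" by (simp add: bilinear_rneg[OF assms(1)])
  then show ?thesis by (metis minus_minus)
qed

section \<open>The Dirac operator on powers of the vector part\<close>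

definition dirac_sum :: "('a \<Rightarrow> 'a \<Rightarrow> 'a) \<Rightarrow> (nat \<Rightarrow> 'a) \<Rightarrow> nat set \<Rightarrow>
    ((nat \<Rightarrow> real) \<Rightarrow> 'a::real_normed_vector) \<Rightarrow> (nat \<Rightarrow> real) \<Rightarrow> 'a" where
  "dirac_sum mul v A f x = (\<Sum>s\<in>A. mul (v s) (partial f s x))"

lemma Dbar_eq_dirac_sum: "Dbar mul v n f x = partial f 0 x - dirac_sum mul v {1..n} f x"
  unfolding Dbar_def dirac_sum_def ..

lemma dirac_sum_split:
  assumes "p \<le> m"
  shows "dirac_sum mul v {1..m} f x = dirac_sum mul v {1..p} f x + dirac_sum mul v {p+1..m} f x"
proof -
  have "{1..m} = {1..p} \<union> {p+1..m}" using assms by auto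
  then show ?thesis unfolding dirac_sum_def by (simp add: sum.union_disjoint)
qed

locale anticommuting_frame = unital_left_alternative +
  fixes v :: "nat \<Rightarrow> 'a::euclidean_space" and m :: nat
  assumes v_zero: "v 0 = e"
    and v_square: "s \<in> {1..m} \<Longrightarrow> mul (v s) (v s) = - e"
    and v_anticommute:
      "s \<in> {1..m} \<Longrightarrow> t \<in> {1..m} \<Longrightarrow> s \<noteq> t \<Longrightarrow> mul (v s) (v t) = - mul (v t) (v s)"
begin

lemma Dop_eq_dirac_sum: "Dop mul v n f x = partial f 0 x + dirac_sum mul v {1..n} f x"
proof -
  have "{..n} = insert 0 {1..n}" by auto
  then show ?thesis unfolding Dop_def dirac_sum_def by (simp add: v_zero mul_unit_left)
qed

lemma v_square_mul: "s \<in> {1..m} \<Longrightarrow> mul (v s) (mul (v s) c) = - c"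
  using square_mul_assoc[of "v s" "- 1"] v_square by simp

lemma xq_square: "mul (xq v p m y) (xq v p m y) = (- xq_sqnorm p m y) *\<^sub>R e"
  unfolding xq_def xq_sqnorm_def
  by (subst square_sum_anticommuting) (auto intro: v_square v_anticommute)

lemma apow_xq_even: "apow mul e (xq v p m y) (2*k) = (- xq_sqnorm p m y)^k *\<^sub>R e"
  using apow_of_square(1)[OF xq_square] .

lemma apow_xq_odd: "apow mul e (xq v p m y) (2*k+1) = (- xq_sqnorm p m y)^k *\<^sub>R xq v p m y"
  using apow_of_square(2)[OF xq_square] .

lemma apow_xq_anticommute:
  assumes "p \<le> m" and "s \<in> {1..p}"
  shows "mul (v s) (mul (apow mul e (xq v p m y) n) c)
    = (-1)^n *\<^sub>R mul (apow mul e (xq v p m y) n) (mul (v s) c)"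
proof (cases "even n")
  case True
  then obtain k where "n = 2*k" by blast
  then show ?thesis using True by (simp add: apow_xq_even mul_linear mul_unit_left)
next
  case False
  then obtain k where n: "n = 2*k+1" using oddE by blast
  have "mul (v s) (xq v p m y) = - mul (xq v p m y) (v s)"
    unfolding xq_def using assms by (intro anticommute_sum v_anticommute) auto
  then have "mul (v s) (mul (xq v p m y) c) = - mul (xq v p m y) (mul (v s) c)"
    by (rule anticommute_mul_assoc)
  then show ?thesis unfolding n apow_xq_odd by (simp add: mul_linear)
qed

lemma partial_apow_xq_mul_low:
  assumes "s \<le> p" and "(\<lambda>t. g (x(s := t))) differentiable (at (x s))"
  shows "partial (\<lambda>y. mul (apow mul e (xq v p m y) n) (g y)) s x
    = mul (apow mul e (xq v p m x) n) (partial g s x)"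
proof -
  have "has_partial (\<lambda>y. apow mul e (xq v p m y) n) s 0 x"
    using assms(1) by (intro has_partial_const_line) (simp add: xq_fun_upd_low)
  from has_partial_bilinear[OF bounded_bilinear this has_partial_partial[OF assms(2)]]
  show ?thesis by (simp add: partial_eqI mul_linear)
qed

lemma dirac_sum_apow_xq_mul_low:
  assumes "p \<le> m" and "\<And>s. s \<le> p \<Longrightarrow> (\<lambda>t. g (x(s := t))) differentiable (at (x s))"
  shows "dirac_sum mul v {1..p} (\<lambda>y. mul (apow mul e (xq v p m y) n) (g y)) x
    = (-1)^n *\<^sub>R mul (apow mul e (xq v p m x) n) (dirac_sum mul v {1..p} g x)"
proof -
  have "mul (v s) (partial (\<lambda>y. mul (apow mul e (xq v p m y) n) (g y)) s x)
      = (-1)^n *\<^sub>R mul (apow mul e (xq v p m x) n) (mul (v s) (partial g s x))"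
    if "s \<in> {1..p}" for s
    using that assms by (simp add: partial_apow_xq_mul_low apow_xq_anticommute)
  then show ?thesis
    unfolding dirac_sum_def by (simp add: mul_sum_right scaleR_sum_right)
qed

lemma Dop_apow_xq_mul:
  assumes "p \<le> m" and "C1_in_first p g"
  shows "Dop mul v m (\<lambda>y. mul (apow mul e (xq v p m y) n) (g y)) x
    = mul (apow mul e (xq v p m x) n) (partial g 0 x + (-1)^n *\<^sub>R dirac_sum mul v {1..p} g x)
      + dirac_sum mul v {p+1..m} (\<lambda>y. mul (apow mul e (xq v p m y) n) (g y)) x"
proof -
  have g_diff: "\<And>s. s \<le> p \<Longrightarrow> (\<lambda>t. g (x(s := t))) differentiable (at (x s))"
    using assms(2) unfolding C1_in_first_def by blast
  show ?thesis
    using dirac_sum_apow_xq_mul_low[OF assms(1) g_diff, of n]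
    unfolding Dop_eq_dirac_sum dirac_sum_split[OF assms(1)]
    by (simp add: partial_apow_xq_mul_low[OF _ g_diff] mul_linear)
qed

lemma Dbar_apow_xq_mul:
  assumes "p \<le> m" and "C1_in_first p g"
  shows "Dbar mul v m (\<lambda>y. mul (apow mul e (xq v p m y) n) (g y)) x
    = mul (apow mul e (xq v p m x) n) (partial g 0 x - (-1)^n *\<^sub>R dirac_sum mul v {1..p} g x)
      - dirac_sum mul v {p+1..m} (\<lambda>y. mul (apow mul e (xq v p m y) n) (g y)) x"
proof -
  have g_diff: "\<And>s. s \<le> p \<Longrightarrow> (\<lambda>t. g (x(s := t))) differentiable (at (x s))"
    using assms(2) unfolding C1_in_first_def by blast
  show ?thesis
    using dirac_sum_apow_xq_mul_low[OF assms(1) g_diff, of n]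
    unfolding Dbar_eq_dirac_sum dirac_sum_split[OF assms(1)]
    by (simp add: partial_apow_xq_mul_low[OF _ g_diff] mul_linear)
qed

lemma sum_v_mul_coordinate:
  "(\<Sum>s\<in>{p+1..m}. mul (v s) ((r * x s) *\<^sub>R c)) = r *\<^sub>R mul (xq v p m x) c"
  unfolding xq_def by (simp add: mul_sum_left mul_linear scaleR_sum_right)

lemma dirac_sum_apow_xq_mul_high_even:
  assumes "C1_in_first p g"
  shows "dirac_sum mul v {p+1..m} (\<lambda>y. mul (apow mul e (xq v p m y) (2*k)) (g y)) x
    = - (real (2*k) *\<^sub>R mul (apow mul e (xq v p m x) (2*k - 1)) (g x))"
proof -
  have g_line: "\<And>s t. s \<in> {p+1..m} \<Longrightarrow> g (x(s := t)) = g x"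
    using assms unfolding C1_in_first_def by auto
  define d where "d = - 2 * real k * (- xq_sqnorm p m x)^(k-1)"
  have F: "(\<lambda>y. mul (apow mul e (xq v p m y) (2*k)) (g y)) = (\<lambda>y. (- xq_sqnorm p m y)^k *\<^sub>R g y)"
    by (simp add: apow_xq_even mul_linear mul_unit_left)
  have partial_F: "partial (\<lambda>y. (- xq_sqnorm p m y)^k *\<^sub>R g y) s x = (d * x s) *\<^sub>R g x"
    if "s \<in> {p+1..m}" for s
    using has_partial_bilinear[OF bounded_bilinear_scaleR has_partial_xq_sqnorm_power[OF that]
        has_partial_const_line[OF g_line[OF that]]]
    by (simp add: partial_eqI d_def)
  have "dirac_sum mul v {p+1..m} (\<lambda>y. mul (apow mul e (xq v p m y) (2*k)) (g y)) x
      = (\<Sum>s\<in>{p+1..m}. mul (v s) ((d * x s) *\<^sub>R g x))"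
    unfolding dirac_sum_def F by (intro sum.cong refl) (simp only: partial_F)
  also have "\<dots> = d *\<^sub>R mul (xq v p m x) (g x)"
    by (rule sum_v_mul_coordinate)
  also have "\<dots> = - (real (2*k) *\<^sub>R mul (apow mul e (xq v p m x) (2*k - 1)) (g x))"
  proof (cases k)
    case (Suc j)
    then have "apow mul e (xq v p m x) (2*k - 1) = (- xq_sqnorm p m x)^j *\<^sub>R xq v p m x"
      using apow_xq_odd[of p x j] by simp
    then show ?thesis unfolding d_def using Suc by (simp add: mul_linear algebra_simps)
  qed (simp add: d_def)
  finally show ?thesis .
qed

lemma dirac_sum_apow_xq_mul_high_odd:
  assumes "C1_in_first p g"
  shows "dirac_sum mul v {p+1..m} (\<lambda>y. mul (apow mul e (xq v p m y) (2*k+1)) (g y)) x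
    = - (real (2*k + (m - p)) *\<^sub>R mul (apow mul e (xq v p m x) (2*k)) (g x))"
proof -
  have g_line: "\<And>s t. s \<in> {p+1..m} \<Longrightarrow> g (x(s := t)) = g x"
    using assms unfolding C1_in_first_def by auto
  define c where "c = (- xq_sqnorm p m x)^k"
  define d where "d = - 2 * real k * (- xq_sqnorm p m x)^(k-1)"
  define X where "X = xq v p m x"
  have F: "(\<lambda>y. mul (apow mul e (xq v p m y) (2*k+1)) (g y))
      = (\<lambda>y. (- xq_sqnorm p m y)^k *\<^sub>R mul (xq v p m y) (g y))"
    unfolding apow_xq_odd by (simp add: mul_linear)
  have partial_F: "partial (\<lambda>y. (- xq_sqnorm p m y)^k *\<^sub>R mul (xq v p m y) (g y)) s x
      = (d * x s) *\<^sub>R mul X (g x) + c *\<^sub>R mul (v s) (g x)"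
    if "s \<in> {p+1..m}" for s
    using has_partial_bilinear[OF bounded_bilinear_scaleR has_partial_xq_sqnorm_power[OF that]
        has_partial_bilinear[OF bounded_bilinear has_partial_xq[OF that]
          has_partial_const_line[OF g_line[OF that]]]]
    by (simp add: partial_eqI c_def d_def X_def mul_linear add.commute)
  have "dirac_sum mul v {p+1..m} (\<lambda>y. mul (apow mul e (xq v p m y) (2*k+1)) (g y)) x
      = (\<Sum>s\<in>{p+1..m}. mul (v s) ((d * x s) *\<^sub>R mul X (g x)))
        + c *\<^sub>R (\<Sum>s\<in>{p+1..m}. mul (v s) (mul (v s) (g x)))"
    unfolding dirac_sum_def F
    by (simp only: partial_F mul_linear sum.distrib scaleR_sum_right cong: sum.cong)
  also have "\<dots> = d *\<^sub>R mul X (mul X (g x)) - (real (m - p) * c) *\<^sub>R g x"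
    unfolding sum_v_mul_coordinate X_def
    by (simp add: v_square_mul sum_negf sum_constant_scaleR)
  also have "\<dots> = (d * (- xq_sqnorm p m x) - real (m - p) * c) *\<^sub>R g x"
    unfolding X_def square_mul_assoc[OF xq_square] by (simp add: scaleR_diff_left)
  also have "d * (- xq_sqnorm p m x) - real (m - p) * c = - real (2*k + (m - p)) * c"
    unfolding c_def d_def by (cases k) (simp_all add: algebra_simps)
  finally show ?thesis
    unfolding apow_xq_even c_def by (simp add: mul_linear mul_unit_left algebra_simps)
qed

end

theorem lemma3p9:
  fixes mul :: "'a::euclidean_space \<Rightarrow> 'a \<Rightarrow> 'a" and e :: 'a and cj :: "'a \<Rightarrow> 'a"
    and v :: "nat \<Rightarrow> 'a" and m p q k :: nat
    and g :: "(nat \<Rightarrow> real) \<Rightarrow> 'a" and x :: "nat \<Rightarrow> real"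
  assumes alg: "alt_algebra mul e"
    and dim: "DIM('a) > 1"
    and inv: "anti_involution mul e cj"
    and sph_ne: "sphere_A mul e cj \<noteq> {}"
    and m1: "m \<ge> 1"
    and v0: "v 0 = e"
    and vS: "\<forall>s\<in>{1..m}. v s \<in> sphere_A mul e cj"
    and vanti: "\<forall>s\<in>{1..m}. \<forall>t\<in>{1..m}. s \<noteq> t \<longrightarrow> mul (v s) (v t) = - mul (v t) (v s)"
    and vindep: "\<forall>c::nat \<Rightarrow> real. (\<Sum>s\<le>m. c s *\<^sub>R v s) = 0 \<longrightarrow> (\<forall>s\<le>m. c s = 0)"
    and MQ: "span (v ` {0..m}) \<subseteq> quadcone_A mul e cj"
    and Rsub: "reals_in e \<subset> span (v ` {0..m})"
    and p: "p \<le> m - 1"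
    and q: "q = m - p"
    and g: "C1_in_first p g"
  shows
    "(Dop mul v m (\<lambda>y. mul (apow mul e (xq v p m y) (2*k)) (g y)) x
       = mul (apow mul e (xq v p m x) (2*k)) (Dop mul v p g x)
         - real (2*k) *\<^sub>R mul (apow mul e (xq v p m x) (2*k - 1)) (g x))
   \<and> (Dop mul v m (\<lambda>y. mul (apow mul e (xq v p m y) (2*k+1)) (g y)) x
       = mul (apow mul e (xq v p m x) (2*k+1)) (Dbar mul v p g x)
         - real (2*k + q) *\<^sub>R mul (apow mul e (xq v p m x) (2*k)) (g x))
   \<and> (Dbar mul v m (\<lambda>y. mul (apow mul e (xq v p m y) (2*k)) (g y)) x
       = mul (apow mul e (xq v p m x) (2*k)) (Dbar mul v p g x)
         + real (2*k) *\<^sub>R mul (apow mul e (xq v p m x) (2*k - 1)) (g x))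
   \<and> (Dbar mul v m (\<lambda>y. mul (apow mul e (xq v p m y) (2*k+1)) (g y)) x
       = mul (apow mul e (xq v p m x) (2*k+1)) (Dop mul v p g x)
         + real (2*k + q) *\<^sub>R mul (apow mul e (xq v p m x) (2*k)) (g x))"
proof -
  interpret anticommuting_frame mul e v m
  proof
    show "bilinear mul" "mul e a = a" "mul a e = a" "mul (mul a a) b = mul a (mul a b)" for a b
      using alg unfolding alt_algebra_def associator_def by auto
    show "mul (v s) (v s) = - e" if "s \<in> {1..m}" for s
      using sphere_A_square alg vS that unfolding alt_algebra_def by blast
    show "v 0 = e" by (rule v0)
    show "mul (v s) (v t) = - mul (v t) (v s)" if "s \<in> {1..m}" "t \<in> {1..m}" "s \<noteq> t" for s t
      using vanti that by blast
  qed
  have pm: "p \<le> m" using p m1 by simp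
  show ?thesis
    unfolding Dop_apow_xq_mul[OF pm g] Dbar_apow_xq_mul[OF pm g]
      dirac_sum_apow_xq_mul_high_even[OF g] dirac_sum_apow_xq_mul_high_odd[OF g]
      Dop_eq_dirac_sum[of p] Dbar_eq_dirac_sum[of _ _ p] q
    by (simp add: mul_linear)
qed

end
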